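(* Consider any sequences evolved by Algorithm 2 and let $d_0:=\|x^0-x^*\|$. Then for all $k\ge1$, $\sum_{j=1}^k\frac{A_j}{\lambda_j^{(p+1)/(p-1)}}\le\frac{d_0^2}{\theta^{2/(p-1)}(1-\sigma^2)}$. In particular (assuming $d_0>0$), for all $k\ge1$, $\lambda_k\ge C\,d_0^{-2(p-1)/(p+1)}$, where $C:=\lambda_1^{\frac{p-1}{p+1}}\theta^{\frac{2}{p+1}}(1-\sigma^2)^{\frac{p-1}{p+1}}$.
   Context: Setting: $\mathcal H$ is a finite-dimensional real inner product space with inner product $\langle\cdot,\cdot\rangle$ and norm $\|\cdot\|$. $f,g:\mathcal H\to(-\infty,\infty]$ are proper, closed, convex functions, $h:=f+g$ has nonempty domain, and $g$ is $\mu$-strongly convex for some $\mu>0$, i.e. $g(tx+(1-t)y)\le tg(x)+(1-t)g(y)-\frac{\mu}{2}t(1-t)\|x-y\|^2$ for all $x,y\in\mathcal H$, $t\in[0,1]$. $x^*$ denotes the unique minimizer of $h$. For $\varepsilon\ge 0$, $\partial_\varepsilon f(y):=\{u\in\mathcal H: f(w)\ge f(y)+\langle u,w-y\rangle-\varepsilon\ \forall w\in\mathcal H\}$, and $\partial g:=\partial_0 g$. Algorithm 2: Choose $x^0,y^0\in\mathcal H$, $\sigma\in[0,1)$, $p\ge2$ and $\theta>0$, and set $A_0=0$. For $k=0,1,2,\dots$: choose $\lambda_{k+1}>0$, set $a_{k+1}=\frac{(1+2\mu A_k)\lambda_{k+1}+\sqrt{(1+2\mu A_k)^2\lambda_{k+1}^2+4(1+\mu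 A_k)A_k\lambda_{k+1}}}{2}$ and $\tilde x^k=\frac{a_{k+1}-\mu A_k\lambda_{k+1}}{A_k+a_{k+1}}x^k+\frac{A_k+\mu A_k\lambda_{k+1}}{A_k+a_{k+1}}y^k$; compute $(y^{k+1},v^{k+1},\varepsilon_{k+1})\in\mathcal H\times\mathcal H\times[0,\infty)$ such that $v^{k+1}\in\partial_{\varepsilon_{k+1}}f(y^{k+1})+\partial g(y^{k+1})$, $\frac{\|\lambda_{k+1}v^{k+1}+y^{k+1}-\tilde x^k\|^2}{1+\lambda_{k+1}\mu}+2\lambda_{k+1}\varepsilon_{k+1}\le\sigma^2\|y^{k+1}-\tilde x^k\|^2$, and $\lambda_{k+1}\|y^{k+1}-\tilde x^k\|^{p-1}\ge\theta$; then set $A_{k+1}=A_k+a_{k+1}$ and $x^{k+1}=\frac{1+\mu A_k}{1+\mu A_{k+1}}x^k+\frac{\mu a_{k+1}}{1+\mu A_{k+1}}y^{k+1}-\frac{a_{k+1}}{1+\mu A_{k+1}}v^{k+1}$. "Sequences evolved by Algorithm 2" means any sequences satisfying all these relations for every $k\ge 0$. *)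

theory Defs
  imports "HOL-Analysis.Analysis"
begin

definition proper_fun :: "('a \<Rightarrow> ereal) \<Rightarrow> bool" where
  "proper_fun f \<longleftrightarrow> (\<forall>x. f x \<noteq> -\<infinity>) \<and> (\<exists>x. f x \<noteq> \<infinity>)"

definition epigraph_e :: "('a \<Rightarrow> ereal) \<Rightarrow> ('a \<times> real) set" where
  "epigraph_e f = {(x, t). f x \<le> ereal t}"

definition closed_fun :: "('a::topological_space \<Rightarrow> ereal) \<Rightarrow> bool" where
  "closed_fun f \<longleftrightarrow> closed (epigraph_e f)"

definition convex_fun :: "('a::real_vector \<Rightarrow> ereal) \<Rightarrow> bool" where
  "convex_fun f \<longleftrightarrow> convex (epigraph_e f)"

definition strongly_convex_fun :: "real \<Rightarrow> ('a::real_normed_vector \<Rightarrow> ereal) \<Rightarrow> bool" where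
  "strongly_convex_fun \<mu> g \<longleftrightarrow>
     (\<forall>x y t. 0 \<le> t \<and> t \<le> 1 \<longrightarrow>
        g (t *\<^sub>R x + (1 - t) *\<^sub>R y)
          \<le> ereal t * g x + ereal (1 - t) * g y - ereal (\<mu> / 2 * t * (1 - t) * (norm (x - y))\<^sup>2))"

definition eps_subdiff :: "('a::real_inner \<Rightarrow> ereal) \<Rightarrow> real \<Rightarrow> 'a \<Rightarrow> 'a set" where
  "eps_subdiff f \<epsilon> y = {u. \<forall>w. f w \<ge> f y + ereal (inner u (w - y)) - ereal \<epsilon>}"

definition subdiff :: "('a::real_inner \<Rightarrow> ereal) \<Rightarrow> 'a \<Rightarrow> 'a set" where
  "subdiff g y = eps_subdiff g 0 y"

definition set_plus_vec :: "'a::plus set \<Rightarrow> 'a set \<Rightarrow> 'a set" where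
  "set_plus_vec S T = {s + t | s t. s \<in> S \<and> t \<in> T}"

end

theory Submission
  imports Defs
begin

text \<open>The potential
  \<open>\<Phi>\<^sub>k = A\<^sub>k (h y\<^sub>k - h x\<^sup>*) + (1 - \<sigma>\<^sup>2)/2 \<Sum>\<^sub>j\<^sub>=\<^sub>1\<^sup>k A\<^sub>j/\<lambda>\<^sub>j \<parallel>y\<^sub>j - xt\<^sub>j\<^sub>-\<^sub>1\<parallel>\<^sup>2 + (1 + \<mu> A\<^sub>k)/2 \<parallel>x\<^sup>* - x\<^sub>k\<parallel>\<^sup>2\<close>
  does not increase along the iteration, and \<open>\<Phi>\<^sub>0 = d\<^sub>0\<^sup>2/2\<close>. For the step, the \<open>\<epsilon>\<close>-subgradient
  inequality for \<open>f\<close> and the strongly convex subgradient inequality for \<open>g\<close>, taken at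
  \<open>y\<^sub>k\<^sub>+\<^sub>1\<close>, bound \<open>h x\<^sup>*\<close> and \<open>h y\<^sub>k\<close> from below. Because \<open>a\<^sub>k\<^sub>+\<^sub>1\<close> is the positive root of
  \<open>a\<^sup>2 = \<lambda> ((1 + 2\<mu>A) a + (1 + \<mu>A) A)\<close>, the resulting quadratic expression splits exactly into
  the new distance term, a term controlled by the relative error criterion, and a nonnegative
  remainder. Since \<open>h y\<^sub>k \<ge> h x\<^sup>*\<close>, this gives \<open>\<Sum> A\<^sub>j/\<lambda>\<^sub>j \<parallel>y\<^sub>j - xt\<^sub>j\<^sub>-\<^sub>1\<parallel>\<^sup>2 \<le> d\<^sub>0\<^sup>2/(1 - \<sigma>\<^sup>2)\<close>, and the
  large-step condition \<open>\<parallel>y\<^sub>j - xt\<^sub>j\<^sub>-\<^sub>1\<parallel> \<ge> (\<theta>/\<lambda>\<^sub>j)\<^bsup>1/(p-1)\<^esup>\<close> turns this into the stated sum.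
  Keeping only the \<open>k\<close>-th term and using \<open>A\<^sub>k \<ge> A\<^sub>1 = \<lambda>\<^sub>1\<close> gives the lower bound on \<open>\<lambda>\<^sub>k\<close>.\<close>

lemma eps_subdiff_lower_bound:
  assumes f: "proper_fun f" and u: "u \<in> eps_subdiff f e y"
  shows "f y \<noteq> \<infinity>" "f y \<noteq> -\<infinity>"
    and "f w \<ge> ereal (real_of_ereal (f y) + inner u (w - y) - e)"
proof -
  from f obtain z where z: "f z \<noteq> \<infinity>" and ninf: "\<And>x. f x \<noteq> -\<infinity>"
    unfolding proper_fun_def by auto
  have sub: "f w' \<ge> f y + ereal (inner u (w' - y)) - ereal e" for w'
    using u unfolding eps_subdiff_def by auto
  show fy: "f y \<noteq> \<infinity>"
    using sub[of z] z by auto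
  show "f y \<noteq> -\<infinity>" using ninf .
  with fy show "f w \<ge> ereal (real_of_ereal (f y) + inner u (w - y) - e)"
    using sub[of w] by (cases "f y") auto
qed

lemma strongly_convex_subdiff_lower_bound:
  fixes g :: "'a::real_inner \<Rightarrow> ereal"
  assumes g: "proper_fun g" and sc: "strongly_convex_fun \<mu> g" and \<mu>: "0 \<le> \<mu>"
    and u: "u \<in> subdiff g y"
  shows "g y \<noteq> \<infinity>" "g y \<noteq> -\<infinity>"
    and "g w \<ge> ereal (real_of_ereal (g y) + inner u (w - y) + \<mu>/2 * (norm (w - y))\<^sup>2)"
proof -
  note sub = eps_subdiff_lower_bound[OF g u[unfolded subdiff_def]]
  show "g y \<noteq> \<infinity>" "g y \<noteq> -\<infinity>" using sub(1,2) .
  then obtain gy where gy: "g y = ereal gy" by (cases "g y") auto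
  show "g w \<ge> ereal (real_of_ereal (g y) + inner u (w - y) + \<mu>/2 * (norm (w - y))\<^sup>2)"
  proof (cases "g w = \<infinity>")
    case False
    moreover have "g w \<noteq> -\<infinity>" using g unfolding proper_fun_def by auto
    ultimately obtain gw where gw: "g w = ereal gw" by (cases "g w") auto
    define E where "E = gw - gy - inner u (w - y)"
    define c where "c = \<mu>/2 * (norm (w - y))\<^sup>2"
    have E_ge: "E \<ge> c * (1 - t)" if t: "0 < t" "t \<le> 1" for t
    proof -
      define z where "z = t *\<^sub>R w + (1 - t) *\<^sub>R y"
      have "z - y = t *\<^sub>R (w - y)" unfolding z_def by (simp add: algebra_simps)
      then have "ereal (gy + t * inner u (w - y)) \<le> g z"
        using sub(3)[of z] gy by simp
      also have "g z \<le> ereal t * g w + ereal (1 - t) * g y - ereal (\<mu> / 2 * t * (1 - t) * (norm (w - y))\<^sup>2)"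
        using sc[unfolded strongly_convex_fun_def, rule_format, of t w y] t unfolding z_def by simp
      also have "\<dots> = ereal (t * gw + (1 - t) * gy - c * t * (1 - t))"
        unfolding gw gy c_def by (simp add: algebra_simps)
      finally have "gy + t * inner u (w - y) \<le> t * gw + (1 - t) * gy - c * t * (1 - t)"
        by simp
      then have "t * (c * (1 - t)) \<le> t * E"
        unfolding E_def by (simp add: algebra_simps)
      then show ?thesis using t by simp
    qed
    have "c \<le> E"
    proof (rule field_le_epsilon)
      fix e :: real assume e: "0 < e"
      define t where "t = min 1 (e / (c + 1))"
      have c: "c \<ge> 0" unfolding c_def using \<mu> by simp
      have t: "0 < t" "t \<le> 1" unfolding t_def using e c by auto
      have "c * t \<le> c * (e / (c + 1))" using c unfolding t_def by (intro mult_left_mono) auto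
      also have "\<dots> \<le> e" using c e by (simp add: field_simps)
      finally show "c \<le> E + e" using E_ge[OF t] by (simp add: algebra_simps)
    qed
    then show ?thesis using gw gy unfolding E_def c_def by simp
  qed simp
qed

lemma larger_root_quadratic:
  fixes b c r :: real
  assumes "b > 0" "c \<ge> 0" and r: "r = (b + sqrt (b\<^sup>2 + 4 * c)) / 2"
  shows "r > 0" "r\<^sup>2 = b * r + c"
proof -
  show "r > 0" unfolding r using assms by (simp add: add_pos_nonneg)
  have root: "2 * r - b = sqrt (b\<^sup>2 + 4 * c)" using r by simp
  have "(2 * r - b)\<^sup>2 = b\<^sup>2 + 4 * c" unfolding root using assms by simp
  then show "r\<^sup>2 = b * r + c" by (simp add: power2_eq_square algebra_simps)
qed

lemma power2_norm_diff:
  "(norm (u - w))\<^sup>2 = (norm u)\<^sup>2 - 2 * inner u w + (norm (w::'a::real_inner))\<^sup>2"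
  unfolding power2_norm_eq_inner by (simp add: inner_diff_left inner_diff_right inner_commute)

lemma power2_norm_scaleR_add:
  "(norm (p *\<^sub>R X + q *\<^sub>R (Y::'a::real_inner)))\<^sup>2
     = p\<^sup>2 * (norm X)\<^sup>2 + 2 * p * q * inner X Y + q\<^sup>2 * (norm Y)\<^sup>2"
  unfolding power2_norm_eq_inner
  by (simp add: inner_add_left inner_add_right inner_commute power2_eq_square algebra_simps)

lemma power2_norm_diff_scaleR_diff:
  "(norm (W - (p *\<^sub>R X - q *\<^sub>R (v::'a::real_inner))))\<^sup>2
     = (norm W)\<^sup>2 - 2 * p * inner W X + 2 * q * inner W v + p\<^sup>2 * (norm X)\<^sup>2
       - 2 * p * q * inner X v + q\<^sup>2 * (norm v)\<^sup>2"
  unfolding power2_norm_eq_inner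
  by (simp add: inner_diff_left inner_diff_right inner_commute power2_eq_square algebra_simps)

text \<open>Coefficientwise form of \<open>hpe_potential_identity\<close>: one equation per Gram entry.\<close>

lemma hpe_coefficient_relations:
  fixes A a \<mu> lam :: real
  assumes A: "A \<ge> 0" and a: "a > 0" and \<mu>: "\<mu> > 0" and lam: "lam > 0"
    and a_eq: "a\<^sup>2 = lam * ((1 + 2 * \<mu> * A) * a + (1 + \<mu> * A) * A)"
  defines "C \<equiv> 1 + \<mu> * (A + a)" and "K \<equiv> (A + a) / (2 * (1 + lam * \<mu>))"
    and "\<alpha> \<equiv> (a - \<mu> * A * lam) / (A + a)" and "\<beta> \<equiv> (A + \<mu> * A * lam) / (A + a)"
    and "\<kappa> \<equiv> \<mu> * A * lam * (1 + \<mu> * A) / (2 * a)"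
    and "s \<equiv> (1 + \<mu> * A) / (1 + \<mu> * (A + a))" and "q \<equiv> a / (1 + \<mu> * (A + a))"
  shows "A = 2 * K * \<beta>" "C * q\<^sup>2 / 2 = K * lam" "C * s * q = 2 * K * \<alpha>"
    "K * \<mu> * \<alpha> * \<beta> = \<kappa>" "A * \<mu> / 2 = K * \<mu> * \<beta>\<^sup>2 + \<kappa>"
    "(1 + \<mu> * A) / 2 = C * s\<^sup>2 / 2 + K * \<mu> * \<alpha>\<^sup>2 + \<kappa>"
    "C * s = 1 + \<mu> * A" "C * q = a"
proof -
  have pos: "C > 0" "1 + lam * \<mu> > 0" "A + a > 0"
    using A a \<mu> lam unfolding C_def by (auto intro: add_pos_nonneg)
  \<comment> \<open>Naming the reciprocals turns every relation into a polynomial identity for \<open>algebra\<close>.\<close>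
  define iC where "iC = 1 / C"
  define iL where "iL = 1 / (1 + lam * \<mu>)"
  define iS where "iS = 1 / (A + a)"
  define ia where "ia = 1 / a"
  have inv: "iC * C = 1" "iL * (1 + lam * \<mu>) = 1" "iS * (A + a) = 1" "ia * a = 1"
    using pos a unfolding iC_def iL_def iS_def ia_def by auto
  have unf: "K = (A + a) * iL / 2" "\<alpha> = (a - \<mu> * A * lam) * iS" "\<beta> = (A + \<mu> * A * lam) * iS"
    "\<kappa> = \<mu> * A * lam * (1 + \<mu> * A) * ia / 2" "q = a * iC" "s = (1 + \<mu> * A) * iC"
    unfolding K_def \<alpha>_def \<beta>_def \<kappa>_def iL_def iS_def ia_def iC_def q_def s_def C_def
    by (auto simp: divide_simps)
  have C: "C = 1 + \<mu> * (A + a)" by (simp add: C_def)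
  show "A = 2 * K * \<beta>" unfolding unf using inv by algebra
  show "C * q\<^sup>2 / 2 = K * lam" unfolding unf using inv a_eq C by algebra
  show "C * s * q = 2 * K * \<alpha>" unfolding unf using inv a_eq C by algebra
  show "K * \<mu> * \<alpha> * \<beta> = \<kappa>" unfolding unf using inv a_eq by algebra
  show "A * \<mu> / 2 = K * \<mu> * \<beta>\<^sup>2 + \<kappa>" unfolding unf using inv a_eq by algebra
  show "(1 + \<mu> * A) / 2 = C * s\<^sup>2 / 2 + K * \<mu> * \<alpha>\<^sup>2 + \<kappa>" unfolding unf using inv a_eq C by algebra
  show "C * s = 1 + \<mu> * A" "C * q = a" using pos unfolding s_def q_def C_def by auto
qed

text \<open>In the step \<open>k \<rightarrow> k + 1\<close> below, \<open>W\<close>, \<open>X\<close>, \<open>Y\<close> are \<open>x\<^sup>*\<close>, \<open>x\<^sub>k\<close>, \<open>y\<^sub>k\<close> relative to \<open>y\<^sub>k\<^sub>+\<^sub>1\<close>,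
  \<open>u = v\<^sub>k\<^sub>+\<^sub>1\<close>, and \<open>Z = xt\<^sub>k - y\<^sub>k\<^sub>+\<^sub>1\<close>.\<close>

lemma hpe_potential_identity:
  fixes X Y W u :: "'a::real_inner" and A a \<mu> lam :: real
  assumes A: "A \<ge> 0" and a: "a > 0" and \<mu>: "\<mu> > 0" and lam: "lam > 0"
    and a_eq: "a\<^sup>2 = lam * ((1 + 2 * \<mu> * A) * a + (1 + \<mu> * A) * A)"
  defines "C \<equiv> 1 + \<mu> * (A + a)"
    and "Z \<equiv> ((a - \<mu> * A * lam) / (A + a)) *\<^sub>R X + ((A + \<mu> * A * lam) / (A + a)) *\<^sub>R Y"
  shows "(1 + \<mu> * A) / 2 * (norm (W - X))\<^sup>2 + a * \<mu> / 2 * (norm W)\<^sup>2 + a * inner u W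
           + A * inner u Y + A * \<mu> / 2 * (norm Y)\<^sup>2
       = C / 2 * (norm (W - (((1 + \<mu> * A) / C) *\<^sub>R X - (a / C) *\<^sub>R u)))\<^sup>2
         + (A + a) / (2 * (1 + lam * \<mu>)) * (\<mu> * (norm Z)\<^sup>2 + 2 * inner u Z - lam * (norm u)\<^sup>2)
         + \<mu> * A * lam * (1 + \<mu> * A) / (2 * a) * (norm (X - Y))\<^sup>2"
proof -
  define K where "K = (A + a) / (2 * (1 + lam * \<mu>))"
  define \<alpha> where "\<alpha> = (a - \<mu> * A * lam) / (A + a)"
  define \<beta> where "\<beta> = (A + \<mu> * A * lam) / (A + a)"
  define \<kappa> where "\<kappa> = \<mu> * A * lam * (1 + \<mu> * A) / (2 * a)"
  define s where "s = (1 + \<mu> * A) / C"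
  define q where "q = a / C"
  note rel = hpe_coefficient_relations[OF A a \<mu> lam a_eq,
      folded C_def K_def \<alpha>_def \<beta>_def \<kappa>_def, folded s_def q_def]
  have uZ: "inner u Z = \<alpha> * inner X u + \<beta> * inner Y u"
    unfolding Z_def \<alpha>_def \<beta>_def by (simp add: inner_add_right inner_commute)
  have C: "1 + \<mu> * A + a * \<mu> = C" unfolding C_def by (simp add: algebra_simps)
  show ?thesis
    unfolding K_def[symmetric] \<kappa>_def[symmetric] s_def[symmetric] q_def[symmetric]
      Z_def \<alpha>_def[symmetric] \<beta>_def[symmetric] power2_norm_scaleR_add power2_norm_diff_scaleR_diff
      power2_norm_diff[of W X] power2_norm_diff[of X Y] uZ[unfolded Z_def \<alpha>_def[symmetric] \<beta>_def[symmetric]]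
    using rel C by (simp add: inner_commute[of u]) algebra
qed

lemma hpe_relative_error_bound:
  fixes v Z :: "'a::real_inner"
  assumes lam: "lam > 0" and \<mu>: "\<mu> \<ge> 0" and B: "B \<ge> 0"
    and err: "(norm (lam *\<^sub>R v - Z))\<^sup>2 / (1 + lam * \<mu>) + 2 * lam * \<epsilon> \<le> \<sigma>\<^sup>2 * (norm Z)\<^sup>2"
  shows "B / (2 * (1 + lam * \<mu>)) * (\<mu> * (norm Z)\<^sup>2 + 2 * inner v Z - lam * (norm v)\<^sup>2)
           \<ge> B * (1 - \<sigma>\<^sup>2) / (2 * lam) * (norm Z)\<^sup>2 + B * \<epsilon>"
proof -
  have pos: "1 + lam * \<mu> > 0" using lam \<mu> by (simp add: add_pos_nonneg)
  have scalar: "B / (2 * (1 + lam * \<mu>)) * (\<mu> * z + 2 * w - lam * n)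
      = B / (2 * lam) * (z - (lam\<^sup>2 * n - 2 * lam * w + z) / (1 + lam * \<mu>))" for z w n
  proof -
    have "lam * (1 + lam * \<mu>) \<noteq> 0" using lam pos by simp
    then show ?thesis using lam pos by (simp add: field_simps power2_eq_square)
  qed
  have "(norm (lam *\<^sub>R v - Z))\<^sup>2 = lam\<^sup>2 * (norm v)\<^sup>2 - 2 * lam * inner v Z + (norm Z)\<^sup>2"
    unfolding power2_norm_diff by (simp add: power_mult_distrib)
  then have "B / (2 * (1 + lam * \<mu>)) * (\<mu> * (norm Z)\<^sup>2 + 2 * inner v Z - lam * (norm v)\<^sup>2)
      = B / (2 * lam) * ((norm Z)\<^sup>2 - (norm (lam *\<^sub>R v - Z))\<^sup>2 / (1 + lam * \<mu>))"
    by (simp only: scalar)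
  also have "\<dots> \<ge> B / (2 * lam) * ((norm Z)\<^sup>2 - (\<sigma>\<^sup>2 * (norm Z)\<^sup>2 - 2 * lam * \<epsilon>))"
    using err lam B by (intro mult_left_mono) auto
  also have "B / (2 * lam) * ((norm Z)\<^sup>2 - (\<sigma>\<^sup>2 * (norm Z)\<^sup>2 - 2 * lam * \<epsilon>))
      = B * (1 - \<sigma>\<^sup>2) / (2 * lam) * (norm Z)\<^sup>2 + B * \<epsilon>"
    using lam by (simp add: field_simps)
  finally show ?thesis .
qed

lemma large_step_term_bound:
  fixes lam A \<theta> p r :: real
  assumes lam: "lam > 0" and A: "A \<ge> 0" and \<theta>: "\<theta> > 0" and p: "p > 1" and r: "r \<ge> 0"
    and large: "lam * r powr (p - 1) \<ge> \<theta>"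
  shows "\<theta> powr (2 / (p - 1)) * (A / lam powr ((p + 1) / (p - 1))) \<le> A / lam * r\<^sup>2"
proof -
  have p1: "p - 1 > 0" using p by simp
  have "r \<noteq> 0" using large \<theta> p1 by auto
  moreover have "(p - 1) * (2 / (p - 1)) = 2" using p1 by (simp add: divide_simps)
  ultimately have r_sq: "(r powr (p - 1)) powr (2 / (p - 1)) = r\<^sup>2"
    using r by (simp add: powr_powr)
  have "\<theta> / lam \<le> r powr (p - 1)" using large lam by (simp add: field_simps)
  then have "(\<theta> / lam) powr (2 / (p - 1)) \<le> r\<^sup>2"
    unfolding r_sq[symmetric] using \<theta> lam p1 by (intro powr_mono2) auto
  moreover have "lam powr ((p + 1) / (p - 1)) = lam * lam powr (2 / (p - 1))"
  proof -
    have "(p + 1) / (p - 1) = 1 + 2 / (p - 1)" using p1 by (simp add: field_simps)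
    then show ?thesis using lam by (simp add: powr_add)
  qed
  then have "\<theta> powr (2 / (p - 1)) * (A / lam powr ((p + 1) / (p - 1)))
      = A / lam * (\<theta> / lam) powr (2 / (p - 1))"
    using lam \<theta> by (simp add: powr_divide field_simps)
  ultimately show ?thesis using A lam by (simp add: divide_right_mono mult_left_mono)
qed

lemma lower_bound_from_inverse_powr_bound:
  fixes l1 l s \<theta> d p :: real
  assumes l1: "l1 > 0" and l: "l > 0" and \<theta>: "\<theta> > 0" and s: "s > 0" and d: "d > 0" and p: "p > 1"
    and bound: "l1 / l powr ((p + 1) / (p - 1)) \<le> d\<^sup>2 / (\<theta> powr (2 / (p - 1)) * s)"
  shows "l \<ge> l1 powr ((p - 1) / (p + 1)) * \<theta> powr (2 / (p + 1)) * s powr ((p - 1) / (p + 1))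
              * d powr (- 2 * (p - 1) / (p + 1))"
proof -
  have p1: "p - 1 > 0" "p + 1 > 0" using p by auto
  define e where "e = (p - 1) / (p + 1)"
  define B where "B = l1 * \<theta> powr (2 / (p - 1)) * s / d\<^sup>2"
  have B: "B > 0" unfolding B_def using l1 \<theta> s d by simp
  have "B \<le> l powr ((p + 1) / (p - 1))"
    using bound l1 l \<theta> s d unfolding B_def by (simp add: field_simps)
  then have "B powr e \<le> (l powr ((p + 1) / (p - 1))) powr e"
    using B p1 unfolding e_def by (intro powr_mono2) auto
  also have "\<dots> = l" using p1 l unfolding e_def by (simp add: powr_powr)
  finally have "B powr e \<le> l" .
  moreover have "2 / (p - 1) * e = 2 / (p + 1)" using p1 unfolding e_def by (simp add: divide_simps)
  then have "(\<theta> powr (2 / (p - 1))) powr e = \<theta> powr (2 / (p + 1))"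
    by (simp add: powr_powr)
  moreover have "(d\<^sup>2) powr e = d powr (2 * (p - 1) / (p + 1))"
    using d unfolding e_def by (simp add: powr_powr flip: powr_numeral)
  moreover have "- 2 * (p - 1) / (p + 1) = - (2 * (p - 1) / (p + 1))"
    by (simp only: minus_divide_left mult_minus_left)
  then have "d powr (- 2 * (p - 1) / (p + 1)) = 1 / d powr (2 * (p - 1) / (p + 1))"
    by (simp only: powr_minus_divide)
  ultimately show ?thesis
    using l1 \<theta> s d unfolding B_def e_def by (simp add: powr_divide powr_mult)
qed

locale accelerated_hpe =
  fixes f g :: "'a::real_inner \<Rightarrow> ereal"
    and \<mu> \<sigma> :: real
    and xs :: 'a
    and x y xt v :: "nat \<Rightarrow> 'a"
    and lam a A \<epsilon> :: "nat \<Rightarrow> real"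
  assumes f_prop: "proper_fun f" and g_prop: "proper_fun g"
    and h_dom: "\<exists>z. f z + g z \<noteq> \<infinity>"
    and mu_pos: "\<mu> > 0" and g_sc: "strongly_convex_fun \<mu> g"
    and xs_min: "\<forall>z. f xs + g xs \<le> f z + g z"
    and sigma: "0 \<le> \<sigma>" "\<sigma> < 1"
    and A0: "A 0 = 0"
    and lam_pos: "\<And>k. lam (Suc k) > 0"
    and a_def: "\<And>k. a (Suc k) =
        ((1 + 2 * \<mu> * A k) * lam (Suc k)
         + sqrt (((1 + 2 * \<mu> * A k) * lam (Suc k))\<^sup>2 + 4 * (1 + \<mu> * A k) * A k * lam (Suc k))) / 2"
    and xt_def: "\<And>k. xt k =
        ((a (Suc k) - \<mu> * A k * lam (Suc k)) / (A k + a (Suc k))) *\<^sub>R x k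
        + ((A k + \<mu> * A k * lam (Suc k)) / (A k + a (Suc k))) *\<^sub>R y k"
    and v_incl: "\<And>k. v (Suc k) \<in> set_plus_vec (eps_subdiff f (\<epsilon> (Suc k)) (y (Suc k))) (subdiff g (y (Suc k)))"
    and err: "\<And>k. (norm (lam (Suc k) *\<^sub>R v (Suc k) + y (Suc k) - xt k))\<^sup>2 / (1 + lam (Suc k) * \<mu>)
                 + 2 * lam (Suc k) * \<epsilon> (Suc k) \<le> \<sigma>\<^sup>2 * (norm (y (Suc k) - xt k))\<^sup>2"
    and A_step: "\<And>k. A (Suc k) = A k + a (Suc k)"
    and x_step: "\<And>k. x (Suc k) =
        ((1 + \<mu> * A k) / (1 + \<mu> * A (Suc k))) *\<^sub>R x k
        + ((\<mu> * a (Suc k)) / (1 + \<mu> * A (Suc k))) *\<^sub>R y (Suc k)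
        - (a (Suc k) / (1 + \<mu> * A (Suc k))) *\<^sub>R v (Suc k)"
begin

lemma a_pos_and_quadratic:
  assumes "A k \<ge> 0"
  shows "a (Suc k) > 0"
    and "(a (Suc k))\<^sup>2 = lam (Suc k) * ((1 + 2 * \<mu> * A k) * a (Suc k) + (1 + \<mu> * A k) * A k)"
proof -
  have b: "(1 + 2 * \<mu> * A k) * lam (Suc k) > 0"
    using assms mu_pos lam_pos[of k] by (simp add: add_pos_nonneg)
  have c: "(1 + \<mu> * A k) * A k * lam (Suc k) \<ge> 0"
    using assms mu_pos lam_pos[of k] by simp
  have "a (Suc k) = ((1 + 2 * \<mu> * A k) * lam (Suc k) + sqrt (((1 + 2 * \<mu> * A k) * lam (Suc k))\<^sup>2
      + 4 * ((1 + \<mu> * A k) * A k * lam (Suc k)))) / 2"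
    using a_def[of k] by (simp add: mult.assoc)
  note root = larger_root_quadratic[OF b c this]
  show "a (Suc k) > 0" using root(1) .
  show "(a (Suc k))\<^sup>2 = lam (Suc k) * ((1 + 2 * \<mu> * A k) * a (Suc k) + (1 + \<mu> * A k) * A k)"
    unfolding root(2) by (simp add: algebra_simps)
qed

lemma A_nonneg: "A k \<ge> 0"
proof (induction k)
  case (Suc k)
  then show ?case using a_pos_and_quadratic(1)[of k] A_step[of k] by simp
qed (simp add: A0)

lemma a_pos: "a (Suc k) > 0"
  using a_pos_and_quadratic(1)[OF A_nonneg] .

lemma a_quadratic:
  "(a (Suc k))\<^sup>2 = lam (Suc k) * ((1 + 2 * \<mu> * A k) * a (Suc k) + (1 + \<mu> * A k) * A k)"
  using a_pos_and_quadratic(2)[OF A_nonneg] .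

lemma A_mono: "m \<le> n \<Longrightarrow> A m \<le> A n"
  by (rule lift_Suc_mono_le) (use A_step a_pos in \<open>auto simp: less_imp_le\<close>)

lemma A_1: "A 1 = lam 1"
  using a_def[of 0] A_step[of 0] A0 lam_pos[of 0] by simp

text \<open>\<open>H\<close> agrees with \<open>h = f + g\<close> where both are finite, and it is only used at such points.\<close>

definition H :: "'a \<Rightarrow> real" where
  "H z = real_of_ereal (f z) + real_of_ereal (g z)"

lemma y_Suc_finite: "f (y (Suc k)) \<noteq> \<infinity>" "g (y (Suc k)) \<noteq> \<infinity>"
  and H_lower_bound: "f w \<noteq> \<infinity> \<Longrightarrow> g w \<noteq> \<infinity> \<Longrightarrow>
    H w \<ge> H (y (Suc k)) + inner (v (Suc k)) (w - y (Suc k)) - \<epsilon> (Suc k)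
           + \<mu> / 2 * (norm (w - y (Suc k)))\<^sup>2"
proof -
  obtain u1 u2 where v: "v (Suc k) = u1 + u2"
    and u1: "u1 \<in> eps_subdiff f (\<epsilon> (Suc k)) (y (Suc k))" and u2: "u2 \<in> subdiff g (y (Suc k))"
    using v_incl[of k] unfolding set_plus_vec_def by auto
  note f_bound = eps_subdiff_lower_bound[OF f_prop u1]
  note g_bound = strongly_convex_subdiff_lower_bound[OF g_prop g_sc less_imp_le[OF mu_pos] u2]
  show "f (y (Suc k)) \<noteq> \<infinity>" "g (y (Suc k)) \<noteq> \<infinity>" using f_bound(1) g_bound(1) .
  assume "f w \<noteq> \<infinity>" "g w \<noteq> \<infinity>"
  moreover have "f w \<noteq> -\<infinity>" "g w \<noteq> -\<infinity>"
    using f_prop g_prop unfolding proper_fun_def by auto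
  ultimately obtain fw gw where "f w = ereal fw" "g w = ereal gw"
    by (cases "f w"; cases "g w") auto
  then show "H w \<ge> H (y (Suc k)) + inner (v (Suc k)) (w - y (Suc k)) - \<epsilon> (Suc k)
           + \<mu> / 2 * (norm (w - y (Suc k)))\<^sup>2"
    using f_bound(3)[of w] g_bound(3)[of w] unfolding H_def v by (simp add: inner_add_left)
qed

lemma xs_finite: "f xs \<noteq> \<infinity>" "g xs \<noteq> \<infinity>"
proof -
  obtain z where "f z + g z \<noteq> \<infinity>" using h_dom by auto
  then have "f xs + g xs \<noteq> \<infinity>" using xs_min by (metis ereal_infty_less_eq(1))
  then show "f xs \<noteq> \<infinity>" "g xs \<noteq> \<infinity>"
    using f_prop g_prop unfolding proper_fun_def by auto
qed

lemma H_xs_le_H_y: "H xs \<le> H (y (Suc k))"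
proof -
  have fin: "f z \<noteq> \<infinity>" "g z \<noteq> \<infinity>" "f z \<noteq> -\<infinity>" "g z \<noteq> -\<infinity>" if "z \<in> {xs, y (Suc k)}" for z
    using that xs_finite y_Suc_finite f_prop g_prop unfolding proper_fun_def by auto
  show ?thesis
    using xs_min[rule_format, of "y (Suc k)"] fin[of xs] fin[of "y (Suc k)"]
    unfolding H_def by (cases "f xs"; cases "g xs"; cases "f (y (Suc k))"; cases "g (y (Suc k))") auto
qed

lemma x_Suc_minus_y_Suc:
  "x (Suc k) - y (Suc k) = ((1 + \<mu> * A k) / (1 + \<mu> * A (Suc k))) *\<^sub>R (x k - y (Suc k))
     - (a (Suc k) / (1 + \<mu> * A (Suc k))) *\<^sub>R v (Suc k)"
proof -
  have "1 + \<mu> * A (Suc k) > 0" using mu_pos A_nonneg[of "Suc k"] by (simp add: add_pos_nonneg)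
  then have "1 + \<mu> * A (Suc k) \<noteq> 0" by simp
  then have coeff: "\<mu> * a (Suc k) / (1 + \<mu> * A (Suc k)) = 1 - (1 + \<mu> * A k) / (1 + \<mu> * A (Suc k))"
    using A_step[of k] by (simp add: field_simps)
  show ?thesis unfolding x_step[of k] coeff by (simp add: algebra_simps)
qed

lemma xt_minus_y_Suc:
  "xt k - y (Suc k) = ((a (Suc k) - \<mu> * A k * lam (Suc k)) / (A k + a (Suc k))) *\<^sub>R (x k - y (Suc k))
     + ((A k + \<mu> * A k * lam (Suc k)) / (A k + a (Suc k))) *\<^sub>R (y k - y (Suc k))"
proof -
  have "A k + a (Suc k) > 0" using A_nonneg[of k] a_pos[of k] by simp
  then have "A k + a (Suc k) \<noteq> 0" by simp
  then have coeff: "(A k + \<mu> * A k * lam (Suc k)) / (A k + a (Suc k))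
      = 1 - (a (Suc k) - \<mu> * A k * lam (Suc k)) / (A k + a (Suc k))"
    by (simp add: field_simps)
  show ?thesis unfolding xt_def[of k] coeff by (simp add: algebra_simps)
qed

lemma weighted_subgradient_bound:
  "a (Suc k) * H xs + A k * H (y k)
     \<ge> A (Suc k) * H (y (Suc k)) - A (Suc k) * \<epsilon> (Suc k)
       + a (Suc k) * \<mu> / 2 * (norm (xs - y (Suc k)))\<^sup>2 + a (Suc k) * inner (v (Suc k)) (xs - y (Suc k))
       + A k * inner (v (Suc k)) (y k - y (Suc k)) + A k * \<mu> / 2 * (norm (y k - y (Suc k)))\<^sup>2"
proof -
  have "a (Suc k) * H xs \<ge> a (Suc k) * (H (y (Suc k)) + inner (v (Suc k)) (xs - y (Suc k)) - \<epsilon> (Suc k)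
      + \<mu> / 2 * (norm (xs - y (Suc k)))\<^sup>2)"
    using H_lower_bound[OF xs_finite, of k] a_pos[of k] by (intro mult_left_mono) auto
  moreover have "A k * H (y k) \<ge> A k * (H (y (Suc k)) + inner (v (Suc k)) (y k - y (Suc k)) - \<epsilon> (Suc k)
      + \<mu> / 2 * (norm (y k - y (Suc k)))\<^sup>2)"
  proof (cases k)
    case (Suc m)
    then show ?thesis
      using H_lower_bound[OF y_Suc_finite[of m], of k] A_nonneg[of k] by (intro mult_left_mono) auto
  qed (simp add: A0)
  ultimately show ?thesis by (simp add: A_step algebra_simps)
qed

lemma potential_step_identity:
  "(1 + \<mu> * A k) / 2 * (norm (xs - x k))\<^sup>2
     + a (Suc k) * \<mu> / 2 * (norm (xs - y (Suc k)))\<^sup>2 + a (Suc k) * inner (v (Suc k)) (xs - y (Suc k))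
     + A k * inner (v (Suc k)) (y k - y (Suc k)) + A k * \<mu> / 2 * (norm (y k - y (Suc k)))\<^sup>2
   = (1 + \<mu> * A (Suc k)) / 2 * (norm (xs - x (Suc k)))\<^sup>2
     + A (Suc k) / (2 * (1 + lam (Suc k) * \<mu>)) * (\<mu> * (norm (xt k - y (Suc k)))\<^sup>2
         + 2 * inner (v (Suc k)) (xt k - y (Suc k)) - lam (Suc k) * (norm (v (Suc k)))\<^sup>2)
     + \<mu> * A k * lam (Suc k) * (1 + \<mu> * A k) / (2 * a (Suc k)) * (norm (x k - y k))\<^sup>2"
proof -
  define X where "X = x k - y (Suc k)"
  define Y where "Y = y k - y (Suc k)"
  define W where "W = xs - y (Suc k)"
  have "xs - x k = W - X" "x k - y k = X - Y" unfolding W_def X_def Y_def by simp_all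
  moreover have "xs - x (Suc k) = W - (((1 + \<mu> * A k) / (1 + \<mu> * A (Suc k))) *\<^sub>R X
      - (a (Suc k) / (1 + \<mu> * A (Suc k))) *\<^sub>R v (Suc k))"
    unfolding W_def X_def x_Suc_minus_y_Suc[symmetric] by simp
  moreover have "xt k - y (Suc k) = ((a (Suc k) - \<mu> * A k * lam (Suc k)) / (A k + a (Suc k))) *\<^sub>R X
      + ((A k + \<mu> * A k * lam (Suc k)) / (A k + a (Suc k))) *\<^sub>R Y"
    unfolding X_def Y_def by (rule xt_minus_y_Suc)
  ultimately show ?thesis
    using hpe_potential_identity[OF A_nonneg[of k] a_pos[of k] mu_pos lam_pos[of k] a_quadratic[of k],
        where X = X and Y = Y and W = W and u = "v (Suc k)"]
    unfolding W_def[symmetric] Y_def[symmetric] A_step by simp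
qed

lemma step_error_bound:
  "A (Suc k) / (2 * (1 + lam (Suc k) * \<mu>)) * (\<mu> * (norm (xt k - y (Suc k)))\<^sup>2
       + 2 * inner (v (Suc k)) (xt k - y (Suc k)) - lam (Suc k) * (norm (v (Suc k)))\<^sup>2)
     \<ge> A (Suc k) * (1 - \<sigma>\<^sup>2) / (2 * lam (Suc k)) * (norm (y (Suc k) - xt k))\<^sup>2
       + A (Suc k) * \<epsilon> (Suc k)"
proof -
  have "(norm (lam (Suc k) *\<^sub>R v (Suc k) - (xt k - y (Suc k))))\<^sup>2 / (1 + lam (Suc k) * \<mu>)
      + 2 * lam (Suc k) * \<epsilon> (Suc k) \<le> \<sigma>\<^sup>2 * (norm (xt k - y (Suc k)))\<^sup>2"
    using err[of k] by (simp add: norm_minus_commute algebra_simps)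
  from hpe_relative_error_bound[OF lam_pos[of k] less_imp_le[OF mu_pos] A_nonneg this]
  show ?thesis by (simp add: norm_minus_commute)
qed

definition residual_sum :: "nat \<Rightarrow> real" where
  "residual_sum k = (\<Sum>j=1..k. A j / lam j * (norm (y j - xt (j - 1)))\<^sup>2)"

definition potential :: "nat \<Rightarrow> real" where
  "potential k = A k * (H (y k) - H xs) + (1 - \<sigma>\<^sup>2) / 2 * residual_sum k
     + (1 + \<mu> * A k) / 2 * (norm (xs - x k))\<^sup>2"

lemma potential_Suc_le: "potential (Suc k) \<le> potential k"
proof -
  have "(1 - \<sigma>\<^sup>2) / 2 * residual_sum (Suc k) = (1 - \<sigma>\<^sup>2) / 2 * residual_sum k
      + A (Suc k) * (1 - \<sigma>\<^sup>2) / (2 * lam (Suc k)) * (norm (y (Suc k) - xt k))\<^sup>2"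
    unfolding residual_sum_def by (simp add: algebra_simps)
  then have "potential (Suc k) = A (Suc k) * H (y (Suc k)) - A k * H xs - a (Suc k) * H xs
      + (1 - \<sigma>\<^sup>2) / 2 * residual_sum k
      + A (Suc k) * (1 - \<sigma>\<^sup>2) / (2 * lam (Suc k)) * (norm (y (Suc k) - xt k))\<^sup>2
      + (1 + \<mu> * A (Suc k)) / 2 * (norm (xs - x (Suc k)))\<^sup>2"
    unfolding potential_def by (simp add: A_step algebra_simps)
  moreover have "potential k = A k * H (y k) - A k * H xs + (1 - \<sigma>\<^sup>2) / 2 * residual_sum k
      + (1 + \<mu> * A k) / 2 * (norm (xs - x k))\<^sup>2"
    unfolding potential_def by (simp add: algebra_simps)
  moreover have "\<mu> * A k * lam (Suc k) * (1 + \<mu> * A k) / (2 * a (Suc k)) * (norm (x k - y k))\<^sup>2 \<ge> 0"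
    using mu_pos A_nonneg[of k] lam_pos[of k] a_pos[of k] by simp
  ultimately show ?thesis
    using weighted_subgradient_bound[of k] potential_step_identity[of k] step_error_bound[of k]
    by linarith
qed

lemma potential_le_initial: "potential k \<le> (norm (x 0 - xs))\<^sup>2 / 2"
proof -
  have "decseq potential" by (rule decseq_SucI) (rule potential_Suc_le)
  then have "potential k \<le> potential 0" by (simp add: decseq_def)
  then show ?thesis unfolding potential_def residual_sum_def by (simp add: A0 norm_minus_commute)
qed

lemma one_minus_sigma_sq_pos: "1 - \<sigma>\<^sup>2 > 0"
  using sigma by (simp add: abs_square_less_1)

lemma residual_sum_bound: "residual_sum k \<le> (norm (x 0 - xs))\<^sup>2 / (1 - \<sigma>\<^sup>2)"
proof -
  have "A k * (H (y k) - H xs) \<ge> 0"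
    using A_nonneg[of k] H_xs_le_H_y[of "k - 1"] by (cases k) (simp_all add: A0)
  moreover have "(1 + \<mu> * A k) / 2 * (norm (xs - x k))\<^sup>2 \<ge> 0"
    using mu_pos A_nonneg[of k] by simp
  ultimately show ?thesis
    using potential_le_initial[of k] one_minus_sigma_sq_pos unfolding potential_def by (simp add: field_simps)
qed

end

locale large_step_accelerated_hpe = accelerated_hpe +
  fixes p \<theta> :: real
  assumes p: "p > 1" and theta: "\<theta> > 0"
    and large: "\<And>k. lam (Suc k) * norm (y (Suc k) - xt k) powr (p - 1) \<ge> \<theta>"
begin

lemma weighted_inverse_powr_sum_bound:
  "(\<Sum>j=1..k. A j / lam j powr ((p + 1) / (p - 1)))
     \<le> (norm (x 0 - xs))\<^sup>2 / (\<theta> powr (2 / (p - 1)) * (1 - \<sigma>\<^sup>2))"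
proof -
  have "\<theta> powr (2 / (p - 1)) * (\<Sum>j=1..k. A j / lam j powr ((p + 1) / (p - 1)))
      = (\<Sum>j=1..k. \<theta> powr (2 / (p - 1)) * (A j / lam j powr ((p + 1) / (p - 1))))"
    by (simp add: sum_distrib_left)
  also have "\<dots> \<le> residual_sum k"
    unfolding residual_sum_def
  proof (rule sum_mono)
    fix j assume "j \<in> {1..k}"
    then obtain i where "j = Suc i" by (cases j) auto
    then show "\<theta> powr (2 / (p - 1)) * (A j / lam j powr ((p + 1) / (p - 1)))
        \<le> A j / lam j * (norm (y j - xt (j - 1)))\<^sup>2"
      using large_step_term_bound[OF lam_pos A_nonneg theta p norm_ge_zero large[of i]] by simp
  qed
  also have "\<dots> \<le> (norm (x 0 - xs))\<^sup>2 / (1 - \<sigma>\<^sup>2)" by (rule residual_sum_bound)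
  finally have "\<theta> powr (2 / (p - 1)) * (\<Sum>j=1..k. A j / lam j powr ((p + 1) / (p - 1))) * (1 - \<sigma>\<^sup>2)
      \<le> (norm (x 0 - xs))\<^sup>2"
    using one_minus_sigma_sq_pos by (simp add: le_divide_eq)
  then show ?thesis
    using theta one_minus_sigma_sq_pos by (simp add: le_divide_eq mult_ac)
qed

lemma lam_lower_bound:
  assumes k: "k \<ge> 1" and d: "norm (x 0 - xs) > 0"
  shows "lam k \<ge> lam 1 powr ((p - 1) / (p + 1)) * \<theta> powr (2 / (p + 1))
           * (1 - \<sigma>\<^sup>2) powr ((p - 1) / (p + 1)) * norm (x 0 - xs) powr (- 2 * (p - 1) / (p + 1))"
proof -
  have "lam 1 \<le> A k" using A_mono[OF k] A_1 by simp
  then have "lam 1 / lam k powr ((p + 1) / (p - 1)) \<le> A k / lam k powr ((p + 1) / (p - 1))"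
    by (simp add: divide_right_mono)
  also have "\<dots> \<le> (\<Sum>j=1..k. A j / lam j powr ((p + 1) / (p - 1)))"
    using k A_nonneg by (intro member_le_sum) auto
  also have "\<dots> \<le> (norm (x 0 - xs))\<^sup>2 / (\<theta> powr (2 / (p - 1)) * (1 - \<sigma>\<^sup>2))"
    by (rule weighted_inverse_powr_sum_bound)
  finally show ?thesis
    using lower_bound_from_inverse_powr_bound[OF _ _ theta _ d p] lam_pos[of 0] lam_pos[of "k - 1"] k
      one_minus_sigma_sq_pos by simp
qed

end

theorem lemma3p1:
  fixes f g :: "'a::euclidean_space \<Rightarrow> ereal"
    and \<mu> \<sigma> p \<theta> :: real
    and xs :: 'a
    and x y xt v :: "nat \<Rightarrow> 'a"
    and lam a A \<epsilon> :: "nat \<Rightarrow> real"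
  assumes f_prop: "proper_fun f" and f_closed: "closed_fun f" and f_conv: "convex_fun f"
    and g_prop: "proper_fun g" and g_closed: "closed_fun g" and g_conv: "convex_fun g"
    and h_dom: "\<exists>z. f z + g z \<noteq> \<infinity>"
    and mu_pos: "\<mu> > 0" and g_sc: "strongly_convex_fun \<mu> g"
    and xs_min: "\<forall>z. f xs + g xs \<le> f z + g z"
    and sigma: "0 \<le> \<sigma>" "\<sigma> < 1" and p: "p \<ge> 2" and theta: "\<theta> > 0"
    and A0: "A 0 = 0"
    and lam_pos: "\<And>k. lam (Suc k) > 0"
    and a_def: "\<And>k. a (Suc k) =
        ((1 + 2 * \<mu> * A k) * lam (Suc k)
         + sqrt (((1 + 2 * \<mu> * A k) * lam (Suc k))\<^sup>2 + 4 * (1 + \<mu> * A k) * A k * lam (Suc k))) / 2"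
    and xt_def: "\<And>k. xt k =
        ((a (Suc k) - \<mu> * A k * lam (Suc k)) / (A k + a (Suc k))) *\<^sub>R x k
        + ((A k + \<mu> * A k * lam (Suc k)) / (A k + a (Suc k))) *\<^sub>R y k"
    and eps_nonneg: "\<And>k. \<epsilon> (Suc k) \<ge> 0"
    and v_incl: "\<And>k. v (Suc k) \<in> set_plus_vec (eps_subdiff f (\<epsilon> (Suc k)) (y (Suc k))) (subdiff g (y (Suc k)))"
    and err: "\<And>k. (norm (lam (Suc k) *\<^sub>R v (Suc k) + y (Suc k) - xt k))\<^sup>2 / (1 + lam (Suc k) * \<mu>)
                 + 2 * lam (Suc k) * \<epsilon> (Suc k) \<le> \<sigma>\<^sup>2 * (norm (y (Suc k) - xt k))\<^sup>2"
    and large: "\<And>k. lam (Suc k) * norm (y (Suc k) - xt k) powr (p - 1) \<ge> \<theta>"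
    and A_step: "\<And>k. A (Suc k) = A k + a (Suc k)"
    and x_step: "\<And>k. x (Suc k) =
        ((1 + \<mu> * A k) / (1 + \<mu> * A (Suc k))) *\<^sub>R x k
        + ((\<mu> * a (Suc k)) / (1 + \<mu> * A (Suc k))) *\<^sub>R y (Suc k)
        - (a (Suc k) / (1 + \<mu> * A (Suc k))) *\<^sub>R v (Suc k)"
  shows "(\<forall>k\<ge>1. (\<Sum>j=1..k. A j / lam j powr ((p + 1) / (p - 1)))
            \<le> (norm (x 0 - xs))\<^sup>2 / (\<theta> powr (2 / (p - 1)) * (1 - \<sigma>\<^sup>2)))
       \<and> (norm (x 0 - xs) > 0 \<longrightarrow>
           (\<forall>k\<ge>1. lam k \<ge>
              lam 1 powr ((p - 1) / (p + 1)) * \<theta> powr (2 / (p + 1)) * (1 - \<sigma>\<^sup>2) powr ((p - 1) / (p + 1))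
              * norm (x 0 - xs) powr (- 2 * (p - 1) / (p + 1))))"
proof -
  interpret large_step_accelerated_hpe f g \<mu> \<sigma> xs x y xt v lam a A \<epsilon> p \<theta>
    by unfold_locales (use assms in auto)
  show ?thesis
    using weighted_inverse_powr_sum_bound lam_lower_bound by blast
qed

end
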